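(* Let $\overline{G}$ be the roommate diversity game with red agents $R=\{r_1,r_2,r_3\}$, blue agents $B=\{b_1,\dots,b_6\}$, room size $3$, and the trichotomous preferences described in the context. Then every outcome $\pi$ of $\overline{G}$ satisfies $|D_\pi^n\cup D_\pi^-|\ge 2$, i.e. at least two agents are in a room whose fraction they do not approve of.
   Context: In a roommate diversity game with agent set $N=R\cup B$ ($R$ red, $B$ blue) and room size $s$, an outcome is a partition of $N$ into rooms of size $s$; $\pi(a)$ is the room containing $a$ and $\theta(C)=|C\cap R|/|C|$ is the fraction of red agents in room $C$. Each agent $a$ has a trichotomous preference given by a partition of the fractions into sets $D_a^+$ (approved), $D_a^n$ (neutral), $D_a^-$ (disapproved), possibly empty, with every approved fraction strictly preferred to every neutral one, every neutral one strictly preferred to every disapproved one, and indifference within each set. For an outcome $\pi$, $D_\pi^+=\{a:\theta(\pi(a))\in D_a^+\}$, and $D_\pi^n$, $D_\pi^-$ are defined analogously. The game $\overline{G}$: $s=3$, and fractions are in $\{0,1/3,2/3,1\}$; $r_1$: $D^+=\{1/3\}$, $D^-=\{2/3,1\}$; $r_2,r_3$: $D^+=\{2/3\}$, $D^-=\{1/3,1\}$; $b_1,b_2,b_3,b_4$: $D^+=\{1/3\}$, $D^n=\{2/3\}$, $D^-=\{0\}$; $b_5,b_6$: $D^+=\{0\}$, $D^-=\{1/3,2/3\}$. (Fractions not listed for an agent are impossible for its color: a red agent is never in a room of fraction $0$, a blue agent never in a room of fraction $1$.) *)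

theory Defs
  imports Complex_Main "HOL-Library.Disjoint_Sets"
begin

datatype agent = r1 | r2 | r3 | b1 | b2 | b3 | b4 | b5 | b6

lemma UNIV_agent: "(UNIV :: agent set) = {r1, r2, r3, b1, b2, b3, b4, b5, b6}"
  by (auto intro: agent.exhaust)

instance agent :: finite
  by standard (simp add: UNIV_agent)

definition Red :: "agent set" where "Red = {r1, r2, r3}"
definition Blue :: "agent set" where "Blue = {b1, b2, b3, b4, b5, b6}"

definition is_outcome :: "nat \<Rightarrow> agent set set \<Rightarrow> bool" where
  "is_outcome s \<pi> \<longleftrightarrow> partition_on (UNIV :: agent set) \<pi> \<and> (\<forall>C\<in>\<pi>. card C = s)"

definition room :: "agent set set \<Rightarrow> agent \<Rightarrow> agent set" where
  "room \<pi> a = (THE C. C \<in> \<pi> \<and> a \<in> C)"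

definition theta :: "agent set \<Rightarrow> rat" where
  "theta C = of_nat (card (C \<inter> Red)) / of_nat (card C)"

fun Dplus :: "agent \<Rightarrow> rat set" where
  "Dplus r1 = {1/3}"
| "Dplus r2 = {2/3}"
| "Dplus r3 = {2/3}"
| "Dplus b5 = {0}"
| "Dplus b6 = {0}"
| "Dplus _ = {1/3}"

fun Dneutral :: "agent \<Rightarrow> rat set" where
  "Dneutral r1 = {}"
| "Dneutral r2 = {}"
| "Dneutral r3 = {}"
| "Dneutral b5 = {}"
| "Dneutral b6 = {}"
| "Dneutral _ = {2/3}"

fun Dminus :: "agent \<Rightarrow> rat set" where
  "Dminus r1 = {2/3, 1}"
| "Dminus r2 = {1/3, 1}"
| "Dminus r3 = {1/3, 1}"
| "Dminus b5 = {1/3, 2/3}"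
| "Dminus b6 = {1/3, 2/3}"
| "Dminus _ = {0}"

definition D_plus_out :: "agent set set \<Rightarrow> agent set" where
  "D_plus_out \<pi> = {a. theta (room \<pi> a) \<in> Dplus a}"
definition D_n_out :: "agent set set \<Rightarrow> agent set" where
  "D_n_out \<pi> = {a. theta (room \<pi> a) \<in> Dneutral a}"
definition D_minus_out :: "agent set set \<Rightarrow> agent set" where
  "D_minus_out \<pi> = {a. theta (room \<pi> a) \<in> Dminus a}"

end

theory Submission
  imports Defs
begin

text \<open>
  Every blue agent of \<open>b\<^sub>1, \<dots>, b\<^sub>4\<close> disapproves of a room without red agents, and no
  blue agent approves of the fraction \<open>2/3\<close>. If the three red agents occupy three
  different rooms, then \<open>r\<^sub>2\<close> and \<open>r\<^sub>3\<close> both sit at fraction \<open>1/3\<close>, which they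
  disapprove of. Otherwise the reds fill at most two rooms, i.e. at most six places, so
  one of the seven agents \<open>r\<^sub>1, r\<^sub>2, r\<^sub>3, b\<^sub>1, \<dots>, b\<^sub>4\<close> is some \<open>b\<^sub>i\<close> in a room without reds. A
  second unhappy agent is \<open>r\<^sub>1\<close> if it shares its room with another red agent, and
  otherwise the blue roommate of \<open>r\<^sub>2\<close> and \<open>r\<^sub>3\<close>.
\<close>

abbreviation unhappy :: "agent set set \<Rightarrow> agent set" where
  "unhappy \<pi> \<equiv> D_n_out \<pi> \<union> D_minus_out \<pi>"

lemma unhappyI:
  "theta (room \<pi> a) \<in> Dneutral a \<union> Dminus a \<Longrightarrow> a \<in> unhappy \<pi>"
  by (auto simp: D_n_out_def D_minus_out_def)

lemma two_le_card:
  assumes "finite S" "x \<in> S" "y \<in> S" "x \<noteq> y"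
  shows "2 \<le> card S"
proof -
  have "card {x, y} \<le> card S"
    using assms by (intro card_mono) auto
  then show ?thesis
    using assms(4) by simp
qed

lemma room_unique:
  assumes "partition_on UNIV \<pi>" "C \<in> \<pi>" "a \<in> C"
  shows "room \<pi> a = C"
  unfolding room_def
proof (rule the_equality)
  fix D
  assume "D \<in> \<pi> \<and> a \<in> D"
  then show "D = C"
    using assms disjointD[OF partition_onD2[OF assms(1)]] by blast
qed (use assms in simp)

lemma room_in_partition:
  assumes "partition_on UNIV \<pi>"
  shows "room \<pi> a \<in> \<pi>" and "a \<in> room \<pi> a"
proof -
  obtain C where "C \<in> \<pi>" "a \<in> C"
    using partition_onD1[OF assms] by blast
  then show "room \<pi> a \<in> \<pi>" "a \<in> room \<pi> a"
    using room_unique[OF assms] by simp_all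
qed

lemma mem_room_iff:
  assumes "partition_on UNIV \<pi>"
  shows "b \<in> room \<pi> a \<longleftrightarrow> room \<pi> b = room \<pi> a"
  using room_unique[OF assms] room_in_partition[OF assms] by metis

lemma is_outcome_partition_on:
  "is_outcome s \<pi> \<Longrightarrow> partition_on UNIV \<pi>"
  by (simp add: is_outcome_def)

lemma card_room:
  "is_outcome s \<pi> \<Longrightarrow> card (room \<pi> a) = s"
  using room_in_partition(1) by (simp add: is_outcome_def)

lemma theta_room:
  "is_outcome 3 \<pi> \<Longrightarrow> theta (room \<pi> a) = of_nat (card (room \<pi> a \<inter> Red)) / 3"
  by (simp add: theta_def card_room)

lemma red_free_room:
  assumes "is_outcome 3 \<pi>" "Red \<subseteq> room \<pi> a \<union> room \<pi> b"
  obtains y where "y \<in> {b1, b2, b3, b4}" "room \<pi> y \<inter> Red = {}"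
proof -
  have "card (room \<pi> a \<union> room \<pi> b) \<le> 6"
    using card_Un_le[of "room \<pi> a" "room \<pi> b"] card_room[OF assms(1)] by simp
  then have "\<not> Red \<union> {b1, b2, b3, b4} \<subseteq> room \<pi> a \<union> room \<pi> b"
    using card_mono[of "room \<pi> a \<union> room \<pi> b" "Red \<union> {b1, b2, b3, b4}"]
    by (auto simp: Red_def)
  then obtain y where "y \<in> {b1, b2, b3, b4}" "y \<notin> room \<pi> a \<union> room \<pi> b"
    using assms(2) by blast
  moreover have "room \<pi> y \<inter> Red = {}"
  proof -
    have "r \<notin> room \<pi> y" if "r \<in> room \<pi> a \<union> room \<pi> b" for r
      using that \<open>y \<notin> room \<pi> a \<union> room \<pi> b\<close>
      by (auto simp: mem_room_iff[OF is_outcome_partition_on[OF assms(1)]])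
    then show ?thesis
      using assms(2) by blast
  qed
  ultimately show thesis
    using that by blast
qed

lemma unhappy_in_red_free_room:
  assumes "is_outcome 3 \<pi>" "Red \<subseteq> room \<pi> a \<union> room \<pi> b"
  obtains y where "y \<in> unhappy \<pi>" "room \<pi> y \<inter> Red = {}"
proof -
  obtain y where y: "y \<in> {b1, b2, b3, b4}" "room \<pi> y \<inter> Red = {}"
    using red_free_room[OF assms] .
  then have "y \<in> unhappy \<pi>"
    by (intro unhappyI) (auto simp: theta_room[OF assms(1)])
  with y(2) show thesis
    using that by blast
qed

lemma unhappy_r1_with_red_roommate:
  assumes "is_outcome 3 \<pi>" "room \<pi> r1 \<inter> Red \<noteq> {r1}"
  shows "r1 \<in> unhappy \<pi>"
proof -
  have own_room: "r1 \<in> room \<pi> r1"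
    using room_in_partition(2)[OF is_outcome_partition_on[OF assms(1)]] .
  then obtain r where "r \<in> room \<pi> r1 \<inter> Red" "r \<noteq> r1"
    using assms(2) by (auto simp: Red_def)
  then have "2 \<le> card (room \<pi> r1 \<inter> Red)"
    using own_room by (intro two_le_card[of _ r1 r]) (auto simp: Red_def)
  moreover have "card (room \<pi> r1 \<inter> Red) \<le> 3"
    using card_mono[of Red "room \<pi> r1 \<inter> Red"] by (simp add: Red_def)
  ultimately show ?thesis
    by (intro unhappyI) (auto simp: theta_room[OF assms(1)] le_Suc_eq numeral_eq_Suc)
qed

lemma unhappy_blue_with_two_reds:
  assumes "is_outcome 3 \<pi>" "x \<notin> Red" "card (room \<pi> x \<inter> Red) = 2"
  shows "x \<in> unhappy \<pi>"
proof -
  have "theta (room \<pi> x) = 2/3"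
    using theta_room[OF assms(1)] assms(3) by simp
  with assms(2) show ?thesis
    by (intro unhappyI) (cases x; simp add: Red_def)
qed

lemma unhappy_in_red_room:
  assumes "is_outcome 3 \<pi>" "Red \<subseteq> room \<pi> a \<union> room \<pi> b"
  obtains z where "z \<in> unhappy \<pi>" "room \<pi> z \<inter> Red \<noteq> {}"
proof (cases "room \<pi> r1 \<inter> Red = {r1}")
  case False
  have "r1 \<in> room \<pi> r1 \<inter> Red"
    using room_in_partition(2)[OF is_outcome_partition_on[OF assms(1)]] by (simp add: Red_def)
  with False show thesis
    using that[of r1] unhappy_r1_with_red_roommate[OF assms(1)] by blast
next
  case True
  note same_room = mem_room_iff[OF is_outcome_partition_on[OF assms(1)]]
  from True have "r2 \<notin> room \<pi> r1" "r3 \<notin> room \<pi> r1"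
    by (auto simp: Red_def)
  with assms(2) have "r3 \<in> room \<pi> r2"
    by (auto simp: same_room Red_def)
  with \<open>r2 \<notin> room \<pi> r1\<close> have reds: "room \<pi> r2 \<inter> Red = {r2, r3}"
    by (auto simp: same_room Red_def)
  have "card (room \<pi> r2 - Red) = 1"
    using card_room[OF assms(1), of r2] card_Diff_subset_Int[of "room \<pi> r2" Red] reds by simp
  then obtain x where x: "x \<in> room \<pi> r2" "x \<notin> Red"
    by (auto simp: card_Suc_eq)
  with reds have x_reds: "room \<pi> x \<inter> Red = {r2, r3}"
    using same_room by metis
  with x(2) have "x \<in> unhappy \<pi>"
    by (intro unhappy_blue_with_two_reds[OF assms(1)]) simp_all
  with x_reds show thesis
    using that[of x] by simp
qed

lemma unhappy_separated_reds:
  assumes "is_outcome 3 \<pi>" "\<nexists>a b. Red \<subseteq> room \<pi> a \<union> room \<pi> b"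
  shows "r2 \<in> unhappy \<pi>" "r3 \<in> unhappy \<pi>"
proof -
  note partition = is_outcome_partition_on[OF assms(1)]
  have "room \<pi> r2 \<inter> Red = {r2}" "room \<pi> r3 \<inter> Red = {r3}"
    using assms(2) mem_room_iff[OF partition] room_in_partition(2)[OF partition]
    unfolding Red_def by blast+
  then show "r2 \<in> unhappy \<pi>" "r3 \<in> unhappy \<pi>"
    by (intro unhappyI; simp add: theta_room[OF assms(1)])+
qed

theorem mainTheorem6:
  assumes "is_outcome 3 \<pi>"
  shows "card (D_n_out \<pi> \<union> D_minus_out \<pi>) \<ge> 2"
proof (cases "\<exists>a b. Red \<subseteq> room \<pi> a \<union> room \<pi> b")
  case True
  then obtain a b where reds: "Red \<subseteq> room \<pi> a \<union> room \<pi> b"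
    by blast
  obtain y where "y \<in> unhappy \<pi>" "room \<pi> y \<inter> Red = {}"
    using unhappy_in_red_free_room[OF assms reds] .
  moreover obtain z where "z \<in> unhappy \<pi>" "room \<pi> z \<inter> Red \<noteq> {}"
    using unhappy_in_red_room[OF assms reds] .
  ultimately show ?thesis
    by (intro two_le_card[of _ y z]) auto
next
  case False
  then show ?thesis
    using unhappy_separated_reds[OF assms] by (intro two_le_card[of _ r2 r3]) auto
qed

end
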